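(* Let $\rho$ be an invertible $n\times n$ density matrix (positive definite with $\mathrm{Tr}[\rho]=1$), let $A,B$ be $n\times n$ Hermitian matrices, and let $\alpha,\beta\ge 0$ satisfy either $\alpha+\beta\ge 1$ or $\alpha+\beta\le \tfrac12$. Then $$U_{\rho,\alpha,\beta}(A)\,U_{\rho,\alpha,\beta}(B)\ \ge\ \alpha\beta\,\bigl|\mathrm{Tr}[\rho[A,B]]\bigr|^2,$$ where $[A,B]=AB-BA$.
   Context: For a Hermitian matrix $H$ put $H_0=H-\mathrm{Tr}[\rho H]I$. Define $$I_{\rho,\alpha,\beta}(H)=\tfrac12\bigl\{\mathrm{Tr}[\rho H_0^2]+\mathrm{Tr}[\rho^{\alpha+\beta}H_0\rho^{1-\alpha-\beta}H_0]-\mathrm{Tr}[\rho^{\alpha}H_0\rho^{1-\alpha}H_0]-\mathrm{Tr}[\rho^{\beta}H_0\rho^{1-\beta}H_0]\bigr\},$$ $$J_{\rho,\alpha,\beta}(H)=\tfrac12\bigl\{\mathrm{Tr}[\rho H_0^2]+\mathrm{Tr}[\rho^{\alpha+\beta}H_0\rho^{1-\alpha-\beta}H_0]+\mathrm{Tr}[\rho^{\alpha}H_0\rho^{1-\alpha}H_0]+\mathrm{Tr}[\rho^{\beta}H_0\rho^{1-\beta}H_0]\bigr\},$$ and $U_{\rho,\alpha,\beta}(H)=\sqrt{I_{\rho,\alpha,\beta}(H)\,J_{\rho,\alpha,\beta}(H)}$. Real powers of $\rho$ are defined by functional calculus (well defined since $\rho$ is invertible); $\alpha+\beta\le 1$ is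 not required. *)

theory Defs
  imports Complex_Main "Jordan_Normal_Form.Matrix"
begin

definition cadj :: "complex mat \<Rightarrow> complex mat" where
  "cadj A = mat (dim_col A) (dim_row A) (\<lambda>(i,j). cnj (A $$ (j,i)))"

definition mtrace :: "complex mat \<Rightarrow> complex" where
  "mtrace A = (\<Sum>i<dim_row A. A $$ (i,i))"

definition hermitian_mat :: "nat \<Rightarrow> complex mat \<Rightarrow> bool" where
  "hermitian_mat n A \<longleftrightarrow> A \<in> carrier_mat n n \<and> cadj A = A"

definition unitary_mat :: "nat \<Rightarrow> complex mat \<Rightarrow> bool" where
  "unitary_mat n U \<longleftrightarrow> U \<in> carrier_mat n n \<and> U * cadj U = 1\<^sub>m n \<and> cadj U * U = 1\<^sub>m n"

definition qform :: "nat \<Rightarrow> complex mat \<Rightarrow> complex vec \<Rightarrow> complex" where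
  "qform n A v = (\<Sum>i<n. \<Sum>j<n. cnj (v $ i) * A $$ (i,j) * v $ j)"

definition posdef_mat :: "nat \<Rightarrow> complex mat \<Rightarrow> bool" where
  "posdef_mat n A \<longleftrightarrow> hermitian_mat n A \<and>
     (\<forall>v \<in> carrier_vec n. v \<noteq> 0\<^sub>v n \<longrightarrow> qform n A v \<in> \<real> \<and> Re (qform n A v) > 0)"

definition density_mat :: "nat \<Rightarrow> complex mat \<Rightarrow> bool" where
  "density_mat n \<rho> \<longleftrightarrow> posdef_mat n \<rho> \<and> invertible_mat \<rho> \<and> mtrace \<rho> = 1"

definition mpow :: "nat \<Rightarrow> complex mat \<Rightarrow> real \<Rightarrow> complex mat" where
  "mpow n \<rho> t = (SOME M. \<exists>U d. unitary_mat n U \<and> (\<forall>i<n. d i > 0) \<and>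
      \<rho> = U * mat_diag n (\<lambda>i. complex_of_real (d i)) * cadj U \<and>
      M = U * mat_diag n (\<lambda>i. complex_of_real (d i powr t)) * cadj U)"

definition centered :: "nat \<Rightarrow> complex mat \<Rightarrow> complex mat \<Rightarrow> complex mat" where
  "centered n \<rho> H = H - mtrace (\<rho> * H) \<cdot>\<^sub>m 1\<^sub>m n"

definition skewterm :: "nat \<Rightarrow> complex mat \<Rightarrow> real \<Rightarrow> complex mat \<Rightarrow> complex" where
  "skewterm n \<rho> a H0 = mtrace (mpow n \<rho> a * H0 * mpow n \<rho> (1 - a) * H0)"

definition Ifun :: "nat \<Rightarrow> complex mat \<Rightarrow> real \<Rightarrow> real \<Rightarrow> complex mat \<Rightarrow> real" where
  "Ifun n \<rho> \<alpha> \<beta> H = (let H0 = centered n \<rho> H in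
     Re (mtrace (\<rho> * (H0 * H0)) + skewterm n \<rho> (\<alpha> + \<beta>) H0
         - skewterm n \<rho> \<alpha> H0 - skewterm n \<rho> \<beta> H0) / 2)"

definition Jfun :: "nat \<Rightarrow> complex mat \<Rightarrow> real \<Rightarrow> real \<Rightarrow> complex mat \<Rightarrow> real" where
  "Jfun n \<rho> \<alpha> \<beta> H = (let H0 = centered n \<rho> H in
     Re (mtrace (\<rho> * (H0 * H0)) + skewterm n \<rho> (\<alpha> + \<beta>) H0
         + skewterm n \<rho> \<alpha> H0 + skewterm n \<rho> \<beta> H0) / 2)"

definition Ufun :: "nat \<Rightarrow> complex mat \<Rightarrow> real \<Rightarrow> real \<Rightarrow> complex mat \<Rightarrow> real" where
  "Ufun n \<rho> \<alpha> \<beta> H = sqrt (Ifun n \<rho> \<alpha> \<beta> H * Jfun n \<rho> \<alpha> \<beta> H)"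

end

theory Submission
  imports Defs "Jordan_Normal_Form.Schur_Decomposition"
begin

text \<open>Diagonalise \<open>\<rho> = U diag(d) U\<^sup>*\<close> and write \<open>K = U\<^sup>* H\<^sub>0 U\<close>. Then
  \<open>I(H) = \<Sum>\<^sub>i\<^sub>j |K\<^sub>i\<^sub>j|\<^sup>2 w\<^sub>I(d\<^sub>i, d\<^sub>j) / 2\<close>, similarly for \<open>J\<close>,
  and \<open>Tr[\<rho>[A,B]] = \<Sum>\<^sub>i\<^sub>j (d\<^sub>i - d\<^sub>j) K\<^sup>A\<^sub>i\<^sub>j K\<^sup>B\<^sub>j\<^sub>i\<close>.
  Symmetrised in \<open>i, j\<close>, the weights factor as
  \<open>(x\<^sup>\<alpha> - y\<^sup>\<alpha>)(x\<^sup>\<beta> - y\<^sup>\<beta>)(x\<^sup>\<gamma> + y\<^sup>\<gamma>)\<close> and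
  \<open>(x\<^sup>\<alpha> + y\<^sup>\<alpha>)(x\<^sup>\<beta> + y\<^sup>\<beta>)(x\<^sup>\<gamma> + y\<^sup>\<gamma>)\<close> with \<open>\<gamma> = 1 - \<alpha> - \<beta>\<close>,
  and their product is at least \<open>16 \<alpha> \<beta> (x - y)\<^sup>2\<close>: in logarithmic coordinates this is an
  inequality between hyperbolic sines, and it is there that the hypothesis
  \<open>\<alpha> + \<beta> \<notin> (1/2, 1)\<close> is used. Cauchy-Schwarz then gives
  \<open>\<alpha> \<beta> |Tr[\<rho>[A,B]]|\<^sup>2 \<le> I(A) J(B)\<close>, by symmetry also \<open>\<le> I(B) J(A)\<close>,
  and the product of the two bounds is the claim.\<close>

section \<open>An inequality between hyperbolic sines\<close>

lemma sinh_mult_le: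
  fixes l z :: real
  assumes "0 \<le> l" "l \<le> 1" "0 \<le> z"
  shows "sinh (l * z) \<le> l * sinh z"
proof -
  let ?g = "\<lambda>t::real. l * sinh t - sinh (l * t)"
  have "?g 0 \<le> ?g z"
  proof (rule DERIV_nonneg_imp_nondecreasing[OF \<open>0 \<le> z\<close>])
    fix x :: real assume x: "0 \<le> x" "x \<le> z"
    have "(?g has_real_derivative (l * cosh x - cosh (l * x) * l)) (at x)"
      by (auto intro!: derivative_eq_intros)
    moreover have "cosh (l * x) \<le> cosh x"
      using x assms by (subst cosh_real_nonneg_le_iff) (auto simp: mult_left_le_one_le)
    then have "0 \<le> l * cosh x - cosh (l * x) * l"
      using assms by (simp add: algebra_simps mult_left_mono)
    ultimately show "\<exists>y. (?g has_real_derivative y) (at x) \<and> 0 \<le> y" by blast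
  qed
  then show ?thesis by simp
qed

lemma sinh_ratio_le:
  fixes a b u :: real
  assumes "0 \<le> a" "a \<le> b" "0 \<le> u"
  shows "b * sinh (a * u) \<le> a * sinh (b * u)"
proof (cases "b = 0")
  case False
  then have "b > 0" using assms by simp
  have "sinh ((a / b) * (b * u)) \<le> (a / b) * sinh (b * u)"
    using assms \<open>b > 0\<close> by (intro sinh_mult_le) auto
  then show ?thesis using \<open>b > 0\<close> by (simp add: pos_le_divide_eq mult.commute)
qed (use assms in simp)

lemma sinh_add_mult_sinh_diff:
  "sinh ((x::real) + y) * sinh (x - y) = (sinh x)\<^sup>2 - (sinh y)\<^sup>2"
proof -
  have "sinh (x + y) * sinh (x - y)
      = (sinh x * cosh y + cosh x * sinh y) * (sinh x * cosh y - cosh x * sinh y)"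
    using sinh_add[of x "-y"] by (simp add: sinh_add)
  also have "\<dots> = (sinh x)\<^sup>2 * (cosh y)\<^sup>2 - (cosh x)\<^sup>2 * (sinh y)\<^sup>2"
    by (simp add: power2_eq_square algebra_simps)
  finally show ?thesis by (simp add: cosh_square_eq algebra_simps)
qed

lemma sinh_mult_sinh_ge:
  fixes a b u :: real
  assumes "0 \<le> a" "0 \<le> b" "0 \<le> u"
  shows "4 * a * b * (sinh ((a + b) * u))\<^sup>2 \<le> (a + b)\<^sup>2 * (sinh (2 * a * u) * sinh (2 * b * u))"
proof -
  define s d where "s = a + b" and "d = a - b"
  have "s * sinh (\<bar>d\<bar> * u) \<le> \<bar>d\<bar> * sinh (s * u)"
    using assms by (intro sinh_ratio_le) (auto simp: s_def d_def)
  moreover have "0 \<le> s * sinh (\<bar>d\<bar> * u)"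
    using assms by (simp add: s_def)
  ultimately have "(s * sinh (\<bar>d\<bar> * u))\<^sup>2 \<le> (\<bar>d\<bar> * sinh (s * u))\<^sup>2"
    by (rule power_mono)
  moreover have "(sinh (\<bar>d\<bar> * u))\<^sup>2 = (sinh (d * u))\<^sup>2"
    by (cases "d \<ge> 0") (auto simp: abs_if)
  ultimately have "s\<^sup>2 * (sinh (d * u))\<^sup>2 \<le> d\<^sup>2 * (sinh (s * u))\<^sup>2"
    by (simp add: power_mult_distrib)
  then have "4 * a * b * (sinh (s * u))\<^sup>2 \<le> s\<^sup>2 * ((sinh (s * u))\<^sup>2 - (sinh (d * u))\<^sup>2)"
    by (simp add: s_def d_def power2_eq_square algebra_simps)
  also have "(sinh (s * u))\<^sup>2 - (sinh (d * u))\<^sup>2 = sinh (2 * a * u) * sinh (2 * b * u)"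
    using sinh_add_mult_sinh_diff[of "s * u" "d * u"] by (simp add: s_def d_def algebra_simps)
  finally show ?thesis by (simp add: s_def)
qed

lemma sinh_mult_cosh: "2 * sinh (x::real) * cosh y = sinh (x + y) + sinh (x - y)"
  using sinh_add[of x y] sinh_add[of x "- y"] by simp

text \<open>This is the only place where the hypothesis on \<open>s = \<alpha> + \<beta>\<close> enters: by
  \<open>2 sinh (s u) cosh ((1 - s) u) = sinh u + sinh ((2 s - 1) u)\<close> the claim says
  \<open>(2 s - 1) sinh u \<le> sinh ((2 s - 1) u)\<close>, which fails for \<open>1/2 < s < 1\<close>.\<close>
lemma sinh_le_sinh_mult_cosh:
  fixes s u :: real
  assumes "0 \<le> s" "1 \<le> s \<or> s \<le> 1/2" "0 \<le> u"
  shows "s * sinh u \<le> sinh (s * u) * cosh ((1 - s) * u)"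
proof -
  have "2 * (sinh (s * u) * cosh ((1 - s) * u)) = sinh u + sinh ((2 * s - 1) * u)"
    using sinh_mult_cosh[of "s * u" "(1 - s) * u"] by (simp add: algebra_simps)
  moreover have "(2 * s - 1) * sinh u \<le> sinh ((2 * s - 1) * u)"
    using assms(2)
  proof
    assume "1 \<le> s"
    then show ?thesis
      using sinh_ratio_le[of 1 "2 * s - 1" u] assms by simp
  next
    assume "s \<le> 1/2"
    then have "sinh ((1 - 2 * s) * u) \<le> (1 - 2 * s) * sinh u"
      using sinh_ratio_le[of "1 - 2 * s" 1 u] assms by simp
    moreover have "sinh ((2 * s - 1) * u) = - sinh ((1 - 2 * s) * u)"
      by (metis minus_diff_eq mult_minus_left sinh_minus)
    ultimately show ?thesis by (simp add: algebra_simps)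
  qed
  ultimately show ?thesis by (simp add: algebra_simps)
qed

lemma sinh_product_inequality:
  fixes a b u :: real
  assumes "0 \<le> a" "0 \<le> b" "1 \<le> a + b \<or> a + b \<le> 1/2"
  shows "4 * a * b * (sinh u)\<^sup>2 \<le> sinh (2 * a * u) * sinh (2 * b * u) * (cosh ((1 - (a + b)) * u))\<^sup>2"
proof -
  have nonneg: "4 * a * b * (sinh u)\<^sup>2
      \<le> sinh (2 * a * u) * sinh (2 * b * u) * (cosh ((1 - (a + b)) * u))\<^sup>2" if "0 \<le> u" for u
  proof -
    define s where "s = a + b"
    have "s * sinh u \<le> sinh (s * u) * cosh ((1 - s) * u)"
      using assms that by (intro sinh_le_sinh_mult_cosh) (auto simp: s_def)
    then have "(s * sinh u)\<^sup>2 \<le> (sinh (s * u) * cosh ((1 - s) * u))\<^sup>2"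
      using assms that by (intro power_mono) (auto simp: s_def)
    then have "4 * a * b * (s * sinh u)\<^sup>2 \<le> 4 * a * b * (sinh (s * u) * cosh ((1 - s) * u))\<^sup>2"
      using assms by (intro mult_left_mono) auto
    then have "s\<^sup>2 * (4 * a * b * (sinh u)\<^sup>2) \<le> 4 * a * b * (sinh (s * u))\<^sup>2 * (cosh ((1 - s) * u))\<^sup>2"
      by (simp add: power_mult_distrib algebra_simps)
    also have "\<dots> \<le> s\<^sup>2 * (sinh (2 * a * u) * sinh (2 * b * u)) * (cosh ((1 - s) * u))\<^sup>2"
      using sinh_mult_sinh_ge[OF assms(1,2) that] by (intro mult_right_mono) (auto simp: s_def)
    finally have "s\<^sup>2 * (4 * a * b * (sinh u)\<^sup>2)
        \<le> s\<^sup>2 * (sinh (2 * a * u) * sinh (2 * b * u) * (cosh ((1 - s) * u))\<^sup>2)"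
      by (simp add: algebra_simps)
    moreover have "s = 0 \<Longrightarrow> a = 0" using assms by (simp add: s_def)
    ultimately show ?thesis
      by (cases "s = 0") (auto simp: s_def)
  qed
  show ?thesis
  proof (cases "0 \<le> u")
    case False
    then show ?thesis
      using nonneg[of "- u"] by (simp add: power2_eq_square)
  qed (rule nonneg)
qed

section \<open>The weights of \<open>I\<close> and \<open>J\<close>\<close>

text \<open>If \<open>\<rho>\<close> has eigenvalues \<open>d\<close> and \<open>K\<close> is the centred observable in the eigenbasis,
  then \<open>2 I = \<Sum>\<^sub>i\<^sub>j |K\<^sub>i\<^sub>j|\<^sup>2 Iweight \<alpha> \<beta> (d i) (d j)\<close>, and likewise for \<open>J\<close>.\<close>
definition Iweight :: "real \<Rightarrow> real \<Rightarrow> real \<Rightarrow> real \<Rightarrow> real" where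
  "Iweight a b x y = x + x powr (a + b) * y powr (1 - (a + b))
     - x powr a * y powr (1 - a) - x powr b * y powr (1 - b)"

definition Jweight :: "real \<Rightarrow> real \<Rightarrow> real \<Rightarrow> real \<Rightarrow> real" where
  "Jweight a b x y = x + x powr (a + b) * y powr (1 - (a + b))
     + x powr a * y powr (1 - a) + x powr b * y powr (1 - b)"

lemma Iweight_symmetrized:
  fixes x y :: real
  assumes "0 < x" "0 < y"
  shows "Iweight a b x y + Iweight a b y x
    = (x powr a - y powr a) * (x powr b - y powr b) * (x powr (1 - (a + b)) + y powr (1 - (a + b)))"
proof -
  obtain p q where "x = exp p" "y = exp q" using assms by (metis exp_ln)
  then show ?thesis
    by (simp add: Iweight_def powr_def algebra_simps flip: exp_add)
qed

lemma Jweight_symmetrized: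
  fixes x y :: real
  assumes "0 < x" "0 < y"
  shows "Jweight a b x y + Jweight a b y x
    = (x powr a + y powr a) * (x powr b + y powr b) * (x powr (1 - (a + b)) + y powr (1 - (a + b)))"
proof -
  obtain p q where "x = exp p" "y = exp q" using assms by (metis exp_ln)
  then show ?thesis
    by (simp add: Jweight_def powr_def algebra_simps flip: exp_add)
qed

lemma Iweight_symmetrized_nonneg:
  fixes x y :: real
  assumes "0 < x" "0 < y" "0 \<le> a" "0 \<le> b"
  shows "0 \<le> Iweight a b x y + Iweight a b y x"
proof -
  have "0 \<le> (x powr a - y powr a) * (x powr b - y powr b)"
  proof (cases "x \<le> y")
    case True
    then have "x powr a \<le> y powr a" "x powr b \<le> y powr b" using assms by (auto intro: powr_mono2)
    then show ?thesis by (simp add: mult_nonpos_nonpos)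
  next
    case False
    then have "y powr a \<le> x powr a" "y powr b \<le> x powr b" using assms by (auto intro: powr_mono2)
    then show ?thesis by simp
  qed
  then show ?thesis
    using assms by (simp add: Iweight_symmetrized)
qed

lemma Jweight_symmetrized_nonneg:
  fixes x y :: real
  assumes "0 < x" "0 < y"
  shows "0 \<le> Jweight a b x y + Jweight a b y x"
  using assms by (simp add: Jweight_symmetrized)

text \<open>In the coordinates \<open>x = e\<^sup>m\<^sup>+\<^sup>u\<close>, \<open>y = e\<^sup>m\<^sup>-\<^sup>u\<close> both sides carry the factor
  \<open>e\<^sup>2\<^sup>m\<close>, and what remains is \<open>sinh_product_inequality\<close>.\<close>
lemma Iweight_Jweight_symmetrized_ge:
  fixes x y a b :: real
  assumes "0 < x" "0 < y" "0 \<le> a" "0 \<le> b" "1 \<le> a + b \<or> a + b \<le> 1/2"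
  shows "16 * a * b * (x - y)\<^sup>2
    \<le> (Iweight a b x y + Iweight a b y x) * (Jweight a b x y + Jweight a b y x)"
proof -
  define m u where "m = (ln x + ln y) / 2" and "u = (ln x - ln y) / 2"
  have x: "x = exp (m + u)" and y: "y = exp (m - u)"
    using assms by (simp_all add: m_def u_def add_divide_distrib[symmetric] diff_divide_distrib[symmetric])
  have diff: "x powr t - y powr t = exp (t * m) * (2 * sinh (t * u))"
    and sum: "x powr t + y powr t = exp (t * m) * (2 * cosh (t * u))" for t
    unfolding x y powr_def sinh_def cosh_def by (simp_all add: algebra_simps flip: exp_add)
  have "(Iweight a b x y + Iweight a b y x) * (Jweight a b x y + Jweight a b y x)
    = 16 * exp (2 * m) * ((2 * sinh (a * u) * cosh (a * u)) * (2 * sinh (b * u) * cosh (b * u))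
        * (cosh ((1 - (a + b)) * u))\<^sup>2)"
    using assms
    by (simp add: Iweight_symmetrized Jweight_symmetrized diff sum power2_eq_square algebra_simps
        flip: exp_add)
  also have "\<dots> = 16 * exp (2 * m) * (sinh (2 * a * u) * sinh (2 * b * u) * (cosh ((1 - (a + b)) * u))\<^sup>2)"
    using sinh_add[of "a * u" "a * u"] sinh_add[of "b * u" "b * u"] by (simp add: algebra_simps)
  finally have rhs: "(Iweight a b x y + Iweight a b y x) * (Jweight a b x y + Jweight a b y x)
    = 16 * exp (2 * m) * (sinh (2 * a * u) * sinh (2 * b * u) * (cosh ((1 - (a + b)) * u))\<^sup>2)" .
  have "x - y = exp m * (2 * sinh u)"
    using diff[of 1] assms by simp
  then have lhs: "16 * a * b * (x - y)\<^sup>2 = 16 * exp (2 * m) * (4 * a * b * (sinh u)\<^sup>2)"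
    by (simp add: power2_eq_square algebra_simps flip: exp_add)
  show ?thesis
    unfolding lhs rhs using sinh_product_inequality[OF assms(3-5), of u] by simp
qed

section \<open>The estimate in an eigenbasis\<close>

lemma Cauchy_Schwarz_double_sum:
  fixes u v :: "'a \<Rightarrow> 'b \<Rightarrow> real"
  assumes "finite I" "finite J"
  shows "(\<Sum>i\<in>I. \<Sum>j\<in>J. u i j * v i j)\<^sup>2 \<le> (\<Sum>i\<in>I. \<Sum>j\<in>J. (u i j)\<^sup>2) * (\<Sum>i\<in>I. \<Sum>j\<in>J. (v i j)\<^sup>2)"
proof -
  have CS: "(\<Sum>p\<in>S. f p * g p)\<^sup>2 \<le> (\<Sum>p\<in>S. (f p)\<^sup>2) * (\<Sum>p\<in>S. (g p)\<^sup>2)"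
    if "finite S" for S and f g :: "_ \<Rightarrow> real"
  proof -
    have "0 \<le> (\<Sum>p\<in>S. \<Sum>q\<in>S. (f p * g q - f q * g p)\<^sup>2)"
      by (intro sum_nonneg) auto
    also have "\<dots> = (\<Sum>p\<in>S. \<Sum>q\<in>S. (f p)\<^sup>2 * (g q)\<^sup>2) + (\<Sum>p\<in>S. \<Sum>q\<in>S. (f q)\<^sup>2 * (g p)\<^sup>2)
        - 2 * (\<Sum>p\<in>S. \<Sum>q\<in>S. (f p * g p) * (f q * g q))"
      by (simp add: power2_eq_square algebra_simps sum_subtractf sum.distrib sum_distrib_left)
    also have "(\<Sum>p\<in>S. \<Sum>q\<in>S. (f q)\<^sup>2 * (g p)\<^sup>2) = (\<Sum>p\<in>S. \<Sum>q\<in>S. (f p)\<^sup>2 * (g q)\<^sup>2)"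
      by (rule sum.swap)
    finally show ?thesis
      by (simp add: sum_product power2_eq_square)
  qed
  show ?thesis
    using CS[of "I \<times> J" "\<lambda>(i, j). u i j" "\<lambda>(i, j). v i j"] assms
    by (simp add: sum.cartesian_product split_def)
qed

lemma sum_symmetrize:
  fixes w f :: "nat \<Rightarrow> nat \<Rightarrow> real"
  assumes "\<And>i j. i < n \<Longrightarrow> j < n \<Longrightarrow> w j i = w i j"
  shows "(\<Sum>i<n. \<Sum>j<n. w i j * f i j) = (\<Sum>i<n. \<Sum>j<n. w i j * (f i j + f j i)) / 2"
proof -
  have "(\<Sum>i<n. \<Sum>j<n. w i j * f j i) = (\<Sum>i<n. \<Sum>j<n. w i j * f i j)"
    using assms by (subst sum.swap) (auto intro!: sum.cong)
  then show ?thesis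
    by (simp add: distrib_left sum.distrib)
qed

lemma sqrt_Iweight_Jweight_ge:
  fixes x y a b :: real
  assumes "0 < x" "0 < y" "0 \<le> a" "0 \<le> b" "1 \<le> a + b \<or> a + b \<le> 1/2"
  shows "4 * sqrt (a * b) * \<bar>x - y\<bar>
    \<le> sqrt (Iweight a b x y + Iweight a b y x) * sqrt (Jweight a b x y + Jweight a b y x)"
proof -
  have "(4 * sqrt (a * b) * \<bar>x - y\<bar>)\<^sup>2
      \<le> (Iweight a b x y + Iweight a b y x) * (Jweight a b x y + Jweight a b y x)"
    using Iweight_Jweight_symmetrized_ge[OF assms] assms(3,4) by (simp add: power_mult_distrib)
  then have "sqrt ((4 * sqrt (a * b) * \<bar>x - y\<bar>)\<^sup>2)
      \<le> sqrt ((Iweight a b x y + Iweight a b y x) * (Jweight a b x y + Jweight a b y x))"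
    by (rule real_sqrt_le_mono)
  then show ?thesis
    using assms(3,4) by (simp add: real_sqrt_mult)
qed

lemma cmod_commutator_sum_le:
  fixes A B :: "nat \<Rightarrow> nat \<Rightarrow> complex" and d :: "nat \<Rightarrow> real"
  assumes B: "\<And>i j. i < n \<Longrightarrow> j < n \<Longrightarrow> B j i = cnj (B i j)"
  shows "cmod (\<Sum>i<n. \<Sum>j<n. of_real (d i - d j) * A i j * B j i)
    \<le> (\<Sum>i<n. \<Sum>j<n. \<bar>d i - d j\<bar> * (cmod (A i j) * cmod (B i j)))"
proof -
  have "cmod (\<Sum>i<n. \<Sum>j<n. of_real (d i - d j) * A i j * B j i)
      \<le> (\<Sum>i<n. \<Sum>j<n. cmod (of_real (d i - d j) * A i j * B j i))"
    by (intro order.trans[OF norm_sum] sum_mono norm_sum)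
  also have "\<dots> = (\<Sum>i<n. \<Sum>j<n. \<bar>d i - d j\<bar> * (cmod (A i j) * cmod (B i j)))"
  proof (intro sum.cong refl)
    fix i j assume "i \<in> {..<n}" "j \<in> {..<n}"
    then have "cmod (B j i) = cmod (B i j)" using B[of i j] by simp
    then show "cmod (of_real (d i - d j) * A i j * B j i) = \<bar>d i - d j\<bar> * (cmod (A i j) * cmod (B i j))"
      by (simp add: norm_mult mult.assoc del: of_real_diff)
  qed
  finally show ?thesis .
qed

text \<open>\<open>A\<close> and \<open>B\<close> play the centred observables in an eigenbasis of \<open>\<rho>\<close> with eigenvalues \<open>d\<close>.\<close>
lemma commutator_sum_le:
  fixes A B :: "nat \<Rightarrow> nat \<Rightarrow> complex" and d :: "nat \<Rightarrow> real" and a b :: real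
  assumes d: "\<And>i. i < n \<Longrightarrow> 0 < d i"
    and A: "\<And>i j. i < n \<Longrightarrow> j < n \<Longrightarrow> A j i = cnj (A i j)"
    and B: "\<And>i j. i < n \<Longrightarrow> j < n \<Longrightarrow> B j i = cnj (B i j)"
    and ab: "0 \<le> a" "0 \<le> b" "1 \<le> a + b \<or> a + b \<le> 1/2"
  shows "a * b * (cmod (\<Sum>i<n. \<Sum>j<n. of_real (d i - d j) * A i j * B j i))\<^sup>2
    \<le> ((\<Sum>i<n. \<Sum>j<n. (cmod (A i j))\<^sup>2 * Iweight a b (d i) (d j)) / 2)
      * ((\<Sum>i<n. \<Sum>j<n. (cmod (B i j))\<^sup>2 * Jweight a b (d i) (d j)) / 2)"
proof -
  define GI GJ where "GI i j = Iweight a b (d i) (d j) + Iweight a b (d j) (d i)"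
    and "GJ i j = Jweight a b (d i) (d j) + Jweight a b (d j) (d i)" for i j
  define u v where "u i j = sqrt (GI i j) * cmod (A i j)"
    and "v i j = sqrt (GJ i j) * cmod (B i j)" for i j
  define T where "T = (\<Sum>i<n. \<Sum>j<n. of_real (d i - d j) * A i j * B j i)"
  have GI: "0 \<le> GI i j" and GJ: "0 \<le> GJ i j" if "i < n" "j < n" for i j
    using that d ab by (simp_all add: GI_def GJ_def Iweight_symmetrized_nonneg Jweight_symmetrized_nonneg)
  have cmod_sym: "cmod (A j i) = cmod (A i j)" "cmod (B j i) = cmod (B i j)"
    if "i < n" "j < n" for i j
    using A[OF that] B[OF that] by simp_all
  have "4 * sqrt (a * b) * cmod T
      \<le> 4 * sqrt (a * b) * (\<Sum>i<n. \<Sum>j<n. \<bar>d i - d j\<bar> * (cmod (A i j) * cmod (B i j)))"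
    unfolding T_def using ab cmod_commutator_sum_le[OF B] by (intro mult_left_mono) auto
  also have "\<dots> = (\<Sum>i<n. \<Sum>j<n. (4 * sqrt (a * b) * \<bar>d i - d j\<bar>) * (cmod (A i j) * cmod (B i j)))"
    by (simp add: sum_distrib_left mult.assoc)
  also have "\<dots> \<le> (\<Sum>i<n. \<Sum>j<n. (sqrt (GI i j) * sqrt (GJ i j)) * (cmod (A i j) * cmod (B i j)))"
    using sqrt_Iweight_Jweight_ge d ab unfolding GI_def GJ_def
    by (intro sum_mono mult_right_mono) auto
  also have "\<dots> = (\<Sum>i<n. \<Sum>j<n. u i j * v i j)"
    by (simp add: u_def v_def algebra_simps)
  finally have "(4 * sqrt (a * b) * cmod T)\<^sup>2 \<le> (\<Sum>i<n. \<Sum>j<n. u i j * v i j)\<^sup>2"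
    using ab by (intro power_mono) auto
  also have "\<dots> \<le> (\<Sum>i<n. \<Sum>j<n. (u i j)\<^sup>2) * (\<Sum>i<n. \<Sum>j<n. (v i j)\<^sup>2)"
    by (rule Cauchy_Schwarz_double_sum) auto
  also have "(\<Sum>i<n. \<Sum>j<n. (u i j)\<^sup>2) = 2 * (\<Sum>i<n. \<Sum>j<n. (cmod (A i j))\<^sup>2 * Iweight a b (d i) (d j))"
    using sum_symmetrize[of n "\<lambda>i j. (cmod (A i j))\<^sup>2" "\<lambda>i j. Iweight a b (d i) (d j)"] GI cmod_sym
    by (simp add: u_def GI_def power_mult_distrib mult.commute)
  also have "(\<Sum>i<n. \<Sum>j<n. (v i j)\<^sup>2) = 2 * (\<Sum>i<n. \<Sum>j<n. (cmod (B i j))\<^sup>2 * Jweight a b (d i) (d j))"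
    using sum_symmetrize[of n "\<lambda>i j. (cmod (B i j))\<^sup>2" "\<lambda>i j. Jweight a b (d i) (d j)"] GJ cmod_sym
    by (simp add: v_def GJ_def power_mult_distrib mult.commute)
  finally show ?thesis
    using ab by (simp add: T_def power_mult_distrib)
qed

section \<open>Adjoints, traces and unitary matrices\<close>

lemma index_mult_mat_sum:
  assumes "A \<in> carrier_mat nr k" "B \<in> carrier_mat k nc" "i < nr" "j < nc"
  shows "(A * B) $$ (i, j) = (\<Sum>l<k. A $$ (i, l) * B $$ (l, j))"
  using assms by (auto simp: scalar_prod_def atLeast0LessThan intro!: sum.cong)

declare index_mult_mat(1)[simp del]

lemma dim_cadj [simp]: "dim_row (cadj A) = dim_col A" "dim_col (cadj A) = dim_row A"
  by (auto simp: cadj_def)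

lemma cadj_carrier_mat [simp]: "A \<in> carrier_mat r c \<Longrightarrow> cadj A \<in> carrier_mat c r"
  by (auto simp: cadj_def)

lemma index_cadj [simp]: "i < dim_col A \<Longrightarrow> j < dim_row A \<Longrightarrow> cadj A $$ (i, j) = cnj (A $$ (j, i))"
  by (auto simp: cadj_def)

lemma cadj_cadj [simp]: "cadj (cadj A) = A"
  by (rule eq_matI) auto

lemma cadj_mult:
  assumes "A \<in> carrier_mat n k" "B \<in> carrier_mat k m"
  shows "cadj (A * B) = cadj B * cadj A"
proof (rule eq_matI)
  fix i j assume "i < dim_row (cadj B * cadj A)" "j < dim_col (cadj B * cadj A)"
  then have i: "i < m" and j: "j < n" using assms by auto
  have "cadj (A * B) $$ (i, j) = (\<Sum>l<k. cnj (A $$ (j, l)) * cnj (B $$ (l, i)))"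
    using assms i j by (simp add: index_mult_mat_sum[of A n k B m] cnj_sum)
  also have "\<dots> = (cadj B * cadj A) $$ (i, j)"
    using assms i j by (subst index_mult_mat_sum[of _ m k _ n]) (auto intro!: sum.cong)
  finally show "cadj (A * B) $$ (i, j) = (cadj B * cadj A) $$ (i, j)" .
qed (use assms in auto)

lemma cadj_minus:
  "A \<in> carrier_mat n m \<Longrightarrow> B \<in> carrier_mat n m \<Longrightarrow> cadj (A - B) = cadj A - cadj B"
  by (rule eq_matI) auto

lemma cadj_smult: "cadj (c \<cdot>\<^sub>m A) = cnj c \<cdot>\<^sub>m cadj A"
  by (rule eq_matI) auto

lemma hermitian_matD:
  "hermitian_mat n A \<Longrightarrow> i < n \<Longrightarrow> j < n \<Longrightarrow> A $$ (j, i) = cnj (A $$ (i, j))"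
  unfolding hermitian_mat_def by (metis carrier_matD index_cadj)

lemma mtrace_mult_comm:
  assumes "A \<in> carrier_mat n m" "B \<in> carrier_mat m n"
  shows "mtrace (A * B) = mtrace (B * A)"
proof -
  have "mtrace (A * B) = (\<Sum>i<n. \<Sum>l<m. A $$ (i, l) * B $$ (l, i))"
    unfolding mtrace_def using assms by (simp add: index_mult_mat_sum[of A n m B n])
  also have "\<dots> = (\<Sum>l<m. \<Sum>i<n. B $$ (l, i) * A $$ (i, l))"
    by (subst sum.swap) (simp add: mult.commute)
  also have "\<dots> = mtrace (B * A)"
    unfolding mtrace_def using assms by (simp add: index_mult_mat_sum[of B m n A m])
  finally show ?thesis .
qed

lemma mtrace_cadj: "A \<in> carrier_mat n n \<Longrightarrow> mtrace (cadj A) = cnj (mtrace A)"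
  unfolding mtrace_def by (simp add: cnj_sum)

lemma mtrace_minus:
  "A \<in> carrier_mat n n \<Longrightarrow> B \<in> carrier_mat n n \<Longrightarrow> mtrace (A - B) = mtrace A - mtrace B"
  unfolding mtrace_def by (simp add: sum_subtractf)

lemma unitary_matD:
  assumes "unitary_mat n U"
  shows "U \<in> carrier_mat n n" "U * cadj U = 1\<^sub>m n" "cadj U * U = 1\<^sub>m n"
  using assms unfolding unitary_mat_def by auto

lemma unitary_matI:
  assumes "U \<in> carrier_mat n n" "U * cadj U = 1\<^sub>m n"
  shows "unitary_mat n U"
  using assms mat_mult_left_right_inverse[of U n "cadj U"] unfolding unitary_mat_def by auto

lemma unitary_matI':
  assumes "U \<in> carrier_mat n n" "cadj U * U = 1\<^sub>m n"
  shows "unitary_mat n U"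
  using assms mat_mult_left_right_inverse[of "cadj U" n U] unfolding unitary_mat_def by auto

lemma unitary_mat_cancel:
  assumes "unitary_mat n U" "X \<in> carrier_mat n n"
  shows "cadj U * (U * X) = X" "U * (cadj U * X) = X"
  using assms unitary_matD[OF assms(1)]
  by (simp_all add: assoc_mult_mat[of _ n n _ n _ n, symmetric])

lemma unitary_mat_mult:
  assumes U: "unitary_mat n U" and V: "unitary_mat n V"
  shows "unitary_mat n (U * V)"
proof (rule unitary_matI)
  note c = unitary_matD[OF U] unitary_matD[OF V]
  show "U * V \<in> carrier_mat n n" using c by simp
  have "U * V * cadj (U * V) = U * (V * cadj V) * cadj U"
    using c(1,4) by (simp add: cadj_mult[of U n n V n] assoc_mult_mat[of _ n n _ n _ n]
        mult_carrier_mat[of _ n n _ n])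
  also have "\<dots> = 1\<^sub>m n" using c by simp
  finally show "U * V * cadj (U * V) = 1\<^sub>m n" .
qed

lemma hermitian_unitary_conj:
  assumes "hermitian_mat n H" "unitary_mat n U"
  shows "hermitian_mat n (cadj U * H * U)"
  using assms unitary_matD[OF assms(2)]
  by (simp add: hermitian_mat_def cadj_mult[of _ n n _ n] assoc_mult_mat[of _ n n _ n _ n]
      mult_carrier_mat[of _ n n _ n])

section \<open>The spectral theorem for Hermitian matrices\<close>

lemma exists_eigenvector:
  fixes A :: "complex mat"
  assumes "A \<in> carrier_mat n n" "0 < n"
  obtains e v where "v \<in> carrier_vec n" "v \<noteq> 0\<^sub>v n" "A *\<^sub>v v = e \<cdot>\<^sub>v v"
proof -
  obtain es where cp: "char_poly A = (\<Prod>e\<leftarrow>es. [:- e, 1:])" and "length es = n"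
    using char_poly_factorized[OF assms(1)] by blast
  then obtain e es' where "es = e # es'" using assms(2) by (cases es) auto
  then have "eigenvalue A e"
    using eigenvalue_root_char_poly[OF assms(1)] cp by simp
  from find_eigenvector[OF assms(1) this] show ?thesis
    using that assms(1) unfolding eigenvector_def by auto
qed

lemma scalar_prod_conj_unfold:
  "w \<in> carrier_vec n \<Longrightarrow> v \<bullet>c w = (\<Sum>k<n. v $ k * cnj (w $ k))"
  by (auto simp: scalar_prod_def atLeast0LessThan intro!: sum.cong)

lemma unitary_mat_of_corthogonal:
  assumes ws: "set ws \<subseteq> carrier_vec n" "corthogonal ws" "length ws = n"
  defines "N i \<equiv> sqrt (\<Sum>k<n. (cmod (ws ! i $ k))\<^sup>2)"
  shows "unitary_mat n (mat n n (\<lambda>(k, i). ws ! i $ k / complex_of_real (N i)))"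
    (is "unitary_mat n ?W")
proof (rule unitary_matI')
  have wsc: "ws ! i \<in> carrier_vec n" if "i < n" for i using ws that by auto
  have self: "ws ! i \<bullet>c ws ! i = complex_of_real ((N i)\<^sup>2)" if "i < n" for i
    unfolding scalar_prod_conj_unfold[OF wsc[OF that]] N_def of_real_sum
    by (auto simp: sum_nonneg simp flip: complex_norm_square intro!: sum.cong)
  have N: "N i \<noteq> 0" if "i < n" for i
    using corthogonalD[OF ws(2), of i i] self[OF that] ws(3) that by auto
  show "?W \<in> carrier_mat n n" by simp
  show "cadj ?W * ?W = 1\<^sub>m n"
  proof (rule eq_matI)
    fix i j assume "i < dim_row (1\<^sub>m n)" "j < dim_col (1\<^sub>m n)"
    then have i: "i < n" and j: "j < n" by auto
    have "(cadj ?W * ?W) $$ (i, j) = (\<Sum>k<n. ws ! j $ k * cnj (ws ! i $ k)) / (of_real (N i) * of_real (N j))"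
      using i j by (simp add: index_mult_mat_sum[of _ n n _ n] sum_divide_distrib algebra_simps)
    also have "\<dots> = (ws ! j \<bullet>c ws ! i) / (of_real (N i) * of_real (N j))"
      using scalar_prod_conj_unfold[OF wsc[OF i]] by simp
    also have "\<dots> = 1\<^sub>m n $$ (i, j)"
      using corthogonalD[OF ws(2), of j i] self[OF i] N[OF i] ws(3) i j
      by (auto simp: power2_eq_square)
    finally show "(cadj ?W * ?W) $$ (i, j) = 1\<^sub>m n $$ (i, j)" .
  qed auto
qed

lemma unitary_mat_with_first_col:
  assumes v: "v \<in> carrier_vec n" "v \<noteq> 0\<^sub>v n"
  obtains W c where "unitary_mat n W" "\<And>k. k < n \<Longrightarrow> W $$ (k, 0) = c * v $ k"
proof -
  define bs where "bs = basis_completion v"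
  note bs = vec_space.basis_completion[OF v, folded bs_def]
  define ws where "ws = gram_schmidt n bs"
  note ws = cof_vec_space.gram_schmidt_result[OF bs(2) bs(4) bs(5) ws_def]
  have "0 < n" using v by (cases n) auto
  then have "bs = v # tl bs" using bs(6,7) by (cases bs) auto
  then have "hd ws = v"
    unfolding ws_def by (metis cof_vec_space.gram_schmidt_hd[OF v(1)])
  then have ws0: "ws ! 0 = v" using ws(4) bs(6) \<open>0 < n\<close> by (cases ws) auto
  define N where "N i = sqrt (\<Sum>k<n. (cmod (ws ! i $ k))\<^sup>2)" for i
  have "unitary_mat n (mat n n (\<lambda>(k, i). ws ! i $ k / complex_of_real (N i)))"
    unfolding N_def using ws bs(6) by (intro unitary_mat_of_corthogonal) auto
  moreover have "mat n n (\<lambda>(k, i). ws ! i $ k / complex_of_real (N i)) $$ (k, 0)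
      = (1 / complex_of_real (N 0)) * v $ k" if "k < n" for k
    using that \<open>0 < n\<close> ws0 by simp
  ultimately show ?thesis using that by blast
qed

definition diag_block :: "complex \<Rightarrow> complex mat \<Rightarrow> complex mat" where
  "diag_block c M = mat (Suc (dim_row M)) (Suc (dim_col M)) (\<lambda>(i, j).
     if i = 0 \<and> j = 0 then c else if i = 0 \<or> j = 0 then 0 else M $$ (i - 1, j - 1))"

lemma diag_block_carrier_mat [simp]:
  "M \<in> carrier_mat m m \<Longrightarrow> diag_block c M \<in> carrier_mat (Suc m) (Suc m)"
  by (auto simp: diag_block_def)

lemma diag_block_mult:
  assumes "M \<in> carrier_mat m m" "N \<in> carrier_mat m m"
  shows "diag_block a M * diag_block b N = diag_block (a * b) (M * N)"
proof (rule eq_matI)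
  fix i j assume "i < dim_row (diag_block (a * b) (M * N))" "j < dim_col (diag_block (a * b) (M * N))"
  then have ij: "i < Suc m" "j < Suc m" using assms by (auto simp: diag_block_def)
  have "(diag_block a M * diag_block b N) $$ (i, j)
      = (\<Sum>k<Suc m. diag_block a M $$ (i, k) * diag_block b N $$ (k, j))"
    using assms ij by (simp add: index_mult_mat_sum[of _ "Suc m" "Suc m" _ "Suc m"])
  also have "\<dots> = diag_block a M $$ (i, 0) * diag_block b N $$ (0, j)
        + (\<Sum>k<m. diag_block a M $$ (i, Suc k) * diag_block b N $$ (Suc k, j))"
    by (rule sum.lessThan_Suc_shift)
  also have "\<dots> = diag_block (a * b) (M * N) $$ (i, j)"
    using assms ij by (cases i; cases j) (auto simp: diag_block_def index_mult_mat_sum[of _ m m _ m])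
  finally show "(diag_block a M * diag_block b N) $$ (i, j) = diag_block (a * b) (M * N) $$ (i, j)" .
qed (use assms in \<open>auto simp: diag_block_def\<close>)

lemma cadj_diag_block: "cadj (diag_block c M) = diag_block (cnj c) (cadj M)"
  by (rule eq_matI) (auto simp: diag_block_def)

lemma diag_block_one: "diag_block 1 (1\<^sub>m m) = 1\<^sub>m (Suc m)"
  by (rule eq_matI) (auto simp: diag_block_def)

lemma diag_block_mat_diag: "diag_block (f 0) (mat_diag m (\<lambda>i. f (Suc i))) = mat_diag (Suc m) f"
  by (rule eq_matI) (auto simp: diag_block_def mat_diag_def gr0_conv_Suc)

lemma unitary_mat_diag_block: "unitary_mat m U \<Longrightarrow> unitary_mat (Suc m) (diag_block 1 U)"
  by (intro unitary_matI)
    (auto simp: unitary_mat_def cadj_diag_block diag_block_mult diag_block_one)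

lemma unitary_conj_first_col:
  assumes A: "A \<in> carrier_mat n n" and W: "unitary_mat n W"
    and v: "v \<in> carrier_vec n" "A *\<^sub>v v = \<mu> \<cdot>\<^sub>v v"
    and Wv: "\<And>k. k < n \<Longrightarrow> W $$ (k, 0) = c * v $ k" and i: "i < n"
  shows "(cadj W * A * W) $$ (i, 0) = (if i = 0 then \<mu> else 0)"
proof -
  note Wc = unitary_matD[OF W]
  have AW: "(A * W) $$ (k, 0) = \<mu> * W $$ (k, 0)" if "k < n" for k
  proof -
    have "(A * W) $$ (k, 0) = c * (A *\<^sub>v v) $ k"
      using A Wc v(1) that Wv
      by (simp add: index_mult_mat_sum[of _ n n _ n] scalar_prod_def atLeast0LessThan
          sum_distrib_left algebra_simps)
    then show ?thesis using v that Wv by simp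
  qed
  have "cadj W * A * W = cadj W * (A * W)"
    using A Wc by (simp add: assoc_mult_mat[of _ n n _ n _ n])
  then have "(cadj W * A * W) $$ (i, 0) = (\<Sum>k<n. cadj W $$ (i, k) * (\<mu> * W $$ (k, 0)))"
    using A Wc i AW by (simp add: index_mult_mat_sum[of _ n n _ n])
  also have "\<dots> = \<mu> * (\<Sum>k<n. cadj W $$ (i, k) * W $$ (k, 0))"
    by (simp add: sum_distrib_left algebra_simps)
  also have "(\<Sum>k<n. cadj W $$ (i, k) * W $$ (k, 0)) = (cadj W * W) $$ (i, 0)"
    using Wc(1) i by (simp add: index_mult_mat_sum[of _ n n _ n])
  finally show ?thesis using Wc i by simp
qed

lemma hermitian_mat_first_col:
  assumes B: "hermitian_mat (Suc m) B"
    and B0: "\<And>i. i < Suc m \<Longrightarrow> B $$ (i, 0) = (if i = 0 then \<mu> else 0)"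
  defines "B' \<equiv> mat m m (\<lambda>(i, j). B $$ (Suc i, Suc j))"
  shows "hermitian_mat m B'" "B = diag_block (complex_of_real (Re \<mu>)) B'"
proof -
  note Bsym = hermitian_matD[OF B]
  have "\<mu> = cnj \<mu>" using Bsym[of 0 0] B0[of 0] by simp
  then have "Im \<mu> = Im (cnj \<mu>)" by (rule arg_cong)
  then have \<mu>: "\<mu> = complex_of_real (Re \<mu>)" by (simp add: complex_eq_iff)
  have "cadj B' = B'"
  proof (rule eq_matI)
    fix i j assume "i < dim_row B'" "j < dim_col B'"
    then show "cadj B' $$ (i, j) = B' $$ (i, j)"
      using Bsym[of "Suc j" "Suc i"] by (simp add: B'_def)
  qed (simp_all add: B'_def)
  then show "hermitian_mat m B'" by (simp add: hermitian_mat_def B'_def)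
  show "B = diag_block (complex_of_real (Re \<mu>)) B'"
  proof (rule eq_matI)
    fix i j assume "i < dim_row (diag_block (complex_of_real (Re \<mu>)) B')"
      "j < dim_col (diag_block (complex_of_real (Re \<mu>)) B')"
    then have ij: "i < Suc m" "j < Suc m" by (simp_all add: diag_block_def B'_def)
    show "B $$ (i, j) = diag_block (complex_of_real (Re \<mu>)) B' $$ (i, j)"
      using B0[OF ij(1)] Bsym[OF ij(2) zero_less_Suc] B0[OF ij(2)] \<mu> ij
      by (cases i; cases j) (auto simp: diag_block_def B'_def)
  qed (use B in \<open>auto simp: diag_block_def B'_def hermitian_mat_def\<close>)
qed

text \<open>An eigenvector, completed to an orthonormal basis, splits off a \<open>1 \<times> 1\<close> block.\<close>
lemma hermitian_mat_deflate:
  assumes "hermitian_mat (Suc m) A"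
  obtains W e A' where "unitary_mat (Suc m) W" "hermitian_mat m A'"
    "cadj W * A * W = diag_block (complex_of_real e) A'"
proof -
  have A: "A \<in> carrier_mat (Suc m) (Suc m)"
    using assms by (simp add: hermitian_mat_def)
  obtain \<mu> v where v: "v \<in> carrier_vec (Suc m)" "v \<noteq> 0\<^sub>v (Suc m)" and Av: "A *\<^sub>v v = \<mu> \<cdot>\<^sub>v v"
    using exists_eigenvector[OF A zero_less_Suc] by metis
  obtain W c where W: "unitary_mat (Suc m) W" and Wv: "\<And>k. k < Suc m \<Longrightarrow> W $$ (k, 0) = c * v $ k"
    using unitary_mat_with_first_col[OF v] by auto
  note deflated = hermitian_mat_first_col[OF hermitian_unitary_conj[OF assms W]
      unitary_conj_first_col[OF A W v(1) Av Wv]]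
  show ?thesis by (rule that[OF W deflated(1,2)])
qed

theorem hermitian_mat_spectral:
  assumes "hermitian_mat n A"
  obtains U d where "unitary_mat n U" "A = U * mat_diag n (\<lambda>i. complex_of_real (d i)) * cadj U"
  using assms
proof (induction n arbitrary: A thesis)
  case 0
  then have "A = 1\<^sub>m 0 * mat_diag 0 (\<lambda>i. complex_of_real 0) * cadj (1\<^sub>m 0)"
    by (intro eq_matI) (auto simp: hermitian_mat_def)
  moreover have "unitary_mat 0 (1\<^sub>m 0)" by (auto simp: unitary_mat_def)
  ultimately show ?case using 0(1)[of "1\<^sub>m 0" "\<lambda>_. 0"] by blast
next
  case (Suc m)
  note sq = assoc_mult_mat[of _ "Suc m" "Suc m" _ "Suc m" _ "Suc m"] mult_carrier_mat[of _ "Suc m" "Suc m" _ "Suc m"]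
  obtain W e A' where W: "unitary_mat (Suc m) W" and A': "hermitian_mat m A'"
    and WAW: "cadj W * A * W = diag_block (complex_of_real e) A'"
    using hermitian_mat_deflate[OF Suc.prems(2)] .
  obtain U' d' where U': "unitary_mat m U'" and A'_eq: "A' = U' * mat_diag m (\<lambda>i. complex_of_real (d' i)) * cadj U'"
    using Suc.IH[OF _ A'] by blast
  define E where "E = diag_block 1 U'"
  define d where "d i = (if i = 0 then e else d' (i - 1))" for i
  have A: "A \<in> carrier_mat (Suc m) (Suc m)" using Suc.prems(2) by (simp add: hermitian_mat_def)
  note Wc = unitary_matD[OF W] and U'c = unitary_matD[OF U']
  have E: "E \<in> carrier_mat (Suc m) (Suc m)" using U'c by (simp add: E_def)
  have "A = W * (cadj W * A * W) * cadj W"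
    using A Wc by (simp add: sq unitary_mat_cancel[OF W])
  also have "cadj W * A * W = E * mat_diag (Suc m) (\<lambda>i. complex_of_real (d i)) * cadj E"
    using U'c unfolding WAW A'_eq E_def cadj_diag_block diag_block_mat_diag[symmetric]
    by (simp add: diag_block_mult[of _ m] mult_carrier_mat[of _ m m _ m] d_def)
  also have "W * (E * mat_diag (Suc m) (\<lambda>i. complex_of_real (d i)) * cadj E) * cadj W
      = (W * E) * mat_diag (Suc m) (\<lambda>i. complex_of_real (d i)) * cadj (W * E)"
    using Wc E by (simp add: sq cadj_mult[of _ "Suc m" "Suc m" _ "Suc m"])
  moreover have "unitary_mat (Suc m) (W * E)"
    unfolding E_def by (intro unitary_mat_mult W unitary_mat_diag_block U')
  ultimately show ?case using Suc.prems(1) by simp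
qed

section \<open>Functions of \<open>\<rho>\<close> in an eigenbasis\<close>

lemma unitary_conj_mult:
  assumes U: "unitary_mat n U" and "P \<in> carrier_mat n n" "Q \<in> carrier_mat n n"
  shows "(U * P * cadj U) * (U * Q * cadj U) = U * (P * Q) * cadj U"
  using assms unitary_matD[OF U]
  by (simp add: assoc_mult_mat[of _ n n _ n _ n] mult_carrier_mat[of _ n n _ n]
      unitary_mat_cancel[OF U])

lemma unitary_conj_cancel:
  assumes U: "unitary_mat n U" and "X \<in> carrier_mat n n"
  shows "U * (cadj U * X * U) * cadj U = X"
  using assms unitary_matD[OF U]
  by (simp add: assoc_mult_mat[of _ n n _ n _ n] mult_carrier_mat[of _ n n _ n]
      unitary_mat_cancel[OF U] right_mult_one_mat[of _ n n])

lemma mtrace_unitary_conj: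
  assumes U: "unitary_mat n U" and X: "X \<in> carrier_mat n n"
  shows "mtrace (U * X * cadj U) = mtrace X"
proof -
  note Uc = unitary_matD[OF U]
  have "mtrace (U * X * cadj U) = mtrace (U * (X * cadj U))"
    using Uc X by (simp add: assoc_mult_mat[of _ n n _ n _ n])
  also have "\<dots> = mtrace ((X * cadj U) * U)"
    using Uc X by (intro mtrace_mult_comm[of _ n n]) auto
  also have "\<dots> = mtrace X"
    using Uc X by (simp add: assoc_mult_mat[of _ n n _ n _ n] right_mult_one_mat[of _ n n])
  finally show ?thesis .
qed

lemma mtrace_mat_diag_product:
  assumes K: "K \<in> carrier_mat n n" and L: "L \<in> carrier_mat n n"
  shows "mtrace (mat_diag n f * K * mat_diag n g * L)
    = (\<Sum>i<n. \<Sum>j<n. f i * g j * K $$ (i, j) * L $$ (j, i))"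
proof -
  have "mat_diag n f * K * mat_diag n g * L = mat_diag n f * (K * (mat_diag n g * L))"
    using K L by (simp add: assoc_mult_mat[of _ n n _ n _ n] mult_carrier_mat[of _ n n _ n])
  then show ?thesis
    using K L
    by (simp add: mtrace_def mat_diag_mult_left[of _ n n] index_mult_mat_sum[of _ n n _ n]
        sum_distrib_left algebra_simps)
qed

lemma mtrace_unitary_diag_product:
  assumes U: "unitary_mat n U" and X: "X \<in> carrier_mat n n" and Y: "Y \<in> carrier_mat n n"
  shows "mtrace ((U * mat_diag n f * cadj U) * X * (U * mat_diag n g * cadj U) * Y)
    = (\<Sum>i<n. \<Sum>j<n. f i * g j * (cadj U * X * U) $$ (i, j) * (cadj U * Y * U) $$ (j, i))"
proof -
  note Uc = unitary_matD[OF U] and sq = mult_carrier_mat[of _ n n _ n]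
  define X' Y' where "X' = cadj U * X * U" and "Y' = cadj U * Y * U"
  have X'Y': "X' \<in> carrier_mat n n" "Y' \<in> carrier_mat n n"
    using Uc X Y by (simp_all add: X'_def Y'_def sq)
  have "(U * mat_diag n f * cadj U) * X * (U * mat_diag n g * cadj U) * Y
      = (U * mat_diag n f * cadj U) * (U * X' * cadj U) * (U * mat_diag n g * cadj U) * (U * Y' * cadj U)"
    using unitary_conj_cancel[OF U X] unitary_conj_cancel[OF U Y] by (simp add: X'_def Y'_def)
  also have "\<dots> = U * (mat_diag n f * X' * mat_diag n g * Y') * cadj U"
    using X'Y' by (simp add: unitary_conj_mult[OF U] sq)
  finally show ?thesis
    using X'Y' by (simp add: mtrace_unitary_conj[OF U] sq mtrace_mat_diag_product X'_def Y'_def)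
qed

lemma unitary_conj_one:
  "unitary_mat n U \<Longrightarrow> U * mat_diag n (\<lambda>_. 1) * cadj U = 1\<^sub>m n"
  using unitary_matD[of n U] by (simp add: right_mult_one_mat[of U n n])

lemma hermitian_mat_entry_mult:
  "hermitian_mat n K \<Longrightarrow> i < n \<Longrightarrow> j < n \<Longrightarrow> K $$ (i, j) * K $$ (j, i) = of_real ((cmod (K $$ (i, j)))\<^sup>2)"
  using hermitian_matD[of n K i j] by (simp flip: complex_norm_square)

lemma mtrace_hermitian_mult_real:
  assumes "hermitian_mat n \<rho>" "hermitian_mat n H"
  shows "cnj (mtrace (\<rho> * H)) = mtrace (\<rho> * H)"
proof -
  have c: "\<rho> \<in> carrier_mat n n" "cadj \<rho> = \<rho>" "H \<in> carrier_mat n n" "cadj H = H"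
    using assms unfolding hermitian_mat_def by auto
  then have "cnj (mtrace (\<rho> * H)) = mtrace (H * \<rho>)"
    by (simp add: mtrace_cadj[of _ n, symmetric] cadj_mult[of _ n n _ n])
  also have "\<dots> = mtrace (\<rho> * H)" using c by (simp add: mtrace_mult_comm[of _ n n])
  finally show ?thesis .
qed

lemma hermitian_centered:
  assumes "hermitian_mat n \<rho>" "hermitian_mat n H"
  shows "hermitian_mat n (centered n \<rho> H)"
  using assms mtrace_hermitian_mult_real[OF assms]
  by (auto simp: hermitian_mat_def centered_def cadj_minus[of _ n n] cadj_smult)

lemma unitary_conj_centered_offdiag:
  assumes U: "unitary_mat n U" and H: "H \<in> carrier_mat n n" and ij: "i < n" "j < n" "i \<noteq> j"
  shows "(cadj U * centered n \<rho> H * U) $$ (i, j) = (cadj U * H * U) $$ (i, j)"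
proof -
  note Uc = unitary_matD[OF U]
  define c where "c = mtrace (\<rho> * H)"
  have "cadj U * centered n \<rho> H = cadj U * H - c \<cdot>\<^sub>m cadj U"
    using Uc H unfolding centered_def c_def[symmetric]
    by (simp add: mult_minus_distrib_mat[of _ n n] mult_smult_distrib[of _ n n _ n] right_mult_one_mat)
  then have "cadj U * centered n \<rho> H * U = (cadj U * H - c \<cdot>\<^sub>m cadj U) * U" by simp
  also have "\<dots> = cadj U * H * U - (c \<cdot>\<^sub>m cadj U) * U"
    using Uc H by (intro minus_mult_distrib_mat[of _ n n]) auto
  also have "(c \<cdot>\<^sub>m cadj U) * U = c \<cdot>\<^sub>m 1\<^sub>m n"
    using Uc by (simp add: mult_smult_assoc_mat[of _ n n _ n])
  finally show ?thesis using Uc H ij by (simp add: mult_carrier_mat[of _ n n _ n])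
qed

text \<open>The spectral decomposition in the definition of \<open>mpow\<close> is not unique, but any two
  decompositions yield the same function of \<open>\<rho>\<close>.\<close>
lemma unitary_diag_eq_transfer:
  assumes U: "unitary_mat n U" and V: "unitary_mat n V"
    and eq: "U * mat_diag n c * cadj U = V * mat_diag n e * cadj V"
    and FG: "\<And>i j. i < n \<Longrightarrow> j < n \<Longrightarrow> c j = e i \<Longrightarrow> F j = G i"
  shows "U * mat_diag n F * cadj U = V * mat_diag n G * cadj V"
proof -
  note Uc = unitary_matD[OF U] and Vc = unitary_matD[OF V]
  note sq = assoc_mult_mat[of _ n n _ n _ n] mult_carrier_mat[of _ n n _ n] right_mult_one_mat[of _ n n]
  define W where "W = cadj V * U"
  have W: "W \<in> carrier_mat n n" unfolding W_def using Uc Vc by (simp add: sq)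
  have "cadj V * (U * mat_diag n c * cadj U) * U = cadj V * (V * mat_diag n e * cadj V) * U"
    using eq by simp
  then have WD: "W * mat_diag n c = mat_diag n e * W"
    unfolding W_def using Uc Vc by (simp add: sq unitary_mat_cancel[OF U] unitary_mat_cancel[OF V])
  have WF: "W * mat_diag n F = mat_diag n G * W"
  proof (rule eq_matI)
    fix i j assume "i < dim_row (mat_diag n G * W)" "j < dim_col (mat_diag n G * W)"
    then have i: "i < n" and j: "j < n" using W by (auto simp: mat_diag_def)
    have "W $$ (i, j) * c j = e i * W $$ (i, j)"
      using arg_cong[OF WD, of "\<lambda>M. M $$ (i, j)"] W i j
      by (simp add: mat_diag_mult_left mat_diag_mult_right)
    then have "W $$ (i, j) * F j = G i * W $$ (i, j)"
      using FG[OF i j] by (auto simp: mult.commute)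
    then show "(W * mat_diag n F) $$ (i, j) = (mat_diag n G * W) $$ (i, j)"
      using W i j by (simp add: mat_diag_mult_left mat_diag_mult_right)
  qed (use W in \<open>auto simp: mat_diag_def\<close>)
  have UVW: "U = V * W" unfolding W_def using Uc by (simp add: unitary_mat_cancel[OF V])
  have "U * mat_diag n F * cadj U = V * (W * mat_diag n F) * cadj U"
    using Uc Vc W by (subst (1) UVW) (simp add: sq)
  also have "\<dots> = V * (mat_diag n G * W) * cadj U" unfolding WF ..
  also have "\<dots> = V * mat_diag n G * (cadj V * (U * cadj U))"
    unfolding W_def using Uc Vc by (simp add: sq)
  also have "\<dots> = V * mat_diag n G * cadj V" using Uc Vc by (simp add: sq)
  finally show ?thesis .
qed

lemma mpow_unitary_diag:
  assumes U: "unitary_mat n U" and d: "\<And>i. i < n \<Longrightarrow> 0 < d i"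
    and \<rho>: "\<rho> = U * mat_diag n (\<lambda>i. complex_of_real (d i)) * cadj U"
  shows "mpow n \<rho> t = U * mat_diag n (\<lambda>i. complex_of_real (d i powr t)) * cadj U"
proof -
  define P where "P M \<longleftrightarrow> (\<exists>U d. unitary_mat n U \<and> (\<forall>i<n. 0 < d i) \<and>
      \<rho> = U * mat_diag n (\<lambda>i. complex_of_real (d i)) * cadj U \<and>
      M = U * mat_diag n (\<lambda>i. complex_of_real (d i powr t)) * cadj U)" for M
  have "P (U * mat_diag n (\<lambda>i. complex_of_real (d i powr t)) * cadj U)"
    unfolding P_def using U d \<rho> by blast
  then have "P (mpow n \<rho> t)"
    unfolding mpow_def P_def[symmetric] by (rule someI)
  then obtain V e where V: "unitary_mat n V"
    and \<rho>': "\<rho> = V * mat_diag n (\<lambda>i. complex_of_real (e i)) * cadj V"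
    and M: "mpow n \<rho> t = V * mat_diag n (\<lambda>i. complex_of_real (e i powr t)) * cadj V"
    unfolding P_def by blast
  show ?thesis
    unfolding M by (rule unitary_diag_eq_transfer[OF V U]) (use \<rho> \<rho>' in auto)
qed

lemma posdef_unitary_diag_pos:
  assumes P: "posdef_mat n \<rho>" and U: "unitary_mat n U"
    and \<rho>: "\<rho> = U * mat_diag n (\<lambda>i. complex_of_real (d i)) * cadj U" and i: "i < n"
  shows "0 < d i"
proof -
  note Uc = unitary_matD[OF U]
  have \<rho>c: "\<rho> \<in> carrier_mat n n" using P by (simp add: posdef_mat_def hermitian_mat_def)
  have "complex_of_real (d i) = (cadj U * \<rho> * U) $$ (i, i)"
    using Uc i unfolding \<rho>
    by (simp add: assoc_mult_mat[of _ n n _ n _ n] mult_carrier_mat[of _ n n _ n]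
        unitary_mat_cancel[OF U] right_mult_one_mat[of _ n n] mat_diag_def)
  also have "\<dots> = (\<Sum>l<n. (\<Sum>k<n. cnj (U $$ (k, i)) * \<rho> $$ (k, l)) * U $$ (l, i))"
    using Uc \<rho>c i by (simp add: index_mult_mat_sum[of _ n n _ n] mult_carrier_mat[of _ n n _ n])
  also have "\<dots> = qform n \<rho> (col U i)"
    unfolding qform_def using Uc i
    by (simp add: sum_distrib_right) (rule sum.swap)
  finally have d: "complex_of_real (d i) = qform n \<rho> (col U i)" .
  have "(\<Sum>k<n. cnj (col U i $ k) * col U i $ k) = (cadj U * U) $$ (i, i)"
    using Uc(1) i by (simp add: index_mult_mat_sum[of _ n n _ n])
  then have unit: "(\<Sum>k<n. cnj (col U i $ k) * col U i $ k) = 1"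
    using Uc(3) i by simp
  have "col U i \<noteq> 0\<^sub>v n"
  proof
    assume "col U i = 0\<^sub>v n"
    then have "(\<Sum>k<n. cnj (col U i $ k) * col U i $ k) = 0"
      by (intro sum.neutral) auto
    with unit show False by simp
  qed
  then have "0 < Re (qform n \<rho> (col U i))"
    using P Uc i unfolding posdef_mat_def by (simp add: col_carrier_vec)
  then show ?thesis using d by (metis Re_complex_of_real)
qed

lemma skewterm_eigenbasis:
  assumes U: "unitary_mat n U" and d: "\<And>i. i < n \<Longrightarrow> 0 < d i"
    and \<rho>: "\<rho> = U * mat_diag n (\<lambda>i. complex_of_real (d i)) * cadj U"
    and H: "hermitian_mat n H"
  shows "skewterm n \<rho> t H = of_real (\<Sum>i<n. \<Sum>j<n.
    d i powr t * d j powr (1 - t) * (cmod ((cadj U * H * U) $$ (i, j)))\<^sup>2)"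
proof -
  have K: "hermitian_mat n (cadj U * H * U)" by (rule hermitian_unitary_conj[OF H U])
  have Hc: "H \<in> carrier_mat n n" using H by (simp add: hermitian_mat_def)
  have "skewterm n \<rho> t H = mtrace ((U * mat_diag n (\<lambda>i. complex_of_real (d i powr t)) * cadj U) * H
      * (U * mat_diag n (\<lambda>i. complex_of_real (d i powr (1 - t))) * cadj U) * H)"
    by (simp add: skewterm_def mpow_unitary_diag[OF U d \<rho>])
  also have "\<dots> = (\<Sum>i<n. \<Sum>j<n. of_real (d i powr t) * of_real (d j powr (1 - t))
      * (cadj U * H * U) $$ (i, j) * (cadj U * H * U) $$ (j, i))"
    by (rule mtrace_unitary_diag_product[OF U Hc Hc])
  finally show ?thesis
    by (simp add: of_real_sum mult.assoc hermitian_mat_entry_mult[OF K])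
qed

lemma mtrace_square_eigenbasis:
  assumes U: "unitary_mat n U"
    and \<rho>: "\<rho> = U * mat_diag n (\<lambda>i. complex_of_real (d i)) * cadj U"
    and H: "hermitian_mat n H"
  shows "mtrace (\<rho> * (H * H)) = of_real (\<Sum>i<n. \<Sum>j<n. d i * (cmod ((cadj U * H * U) $$ (i, j)))\<^sup>2)"
proof -
  have K: "hermitian_mat n (cadj U * H * U)" by (rule hermitian_unitary_conj[OF H U])
  have Hc: "H \<in> carrier_mat n n" using H by (simp add: hermitian_mat_def)
  have "\<rho> * (H * H) = \<rho> * H * (U * mat_diag n (\<lambda>_. 1) * cadj U) * H"
    using Hc unitary_matD[OF U] unfolding unitary_conj_one[OF U] \<rho>
    by (simp add: assoc_mult_mat[of _ n n _ n _ n] mult_carrier_mat[of _ n n _ n] right_mult_one_mat[of _ n n])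
  also have "mtrace \<dots> = (\<Sum>i<n. \<Sum>j<n. of_real (d i) * 1
      * (cadj U * H * U) $$ (i, j) * (cadj U * H * U) $$ (j, i))"
    unfolding \<rho> by (rule mtrace_unitary_diag_product[OF U Hc Hc])
  finally show ?thesis
    by (simp add: of_real_sum mult.assoc hermitian_mat_entry_mult[OF K])
qed

lemma Ifun_Jfun_eigenbasis:
  assumes U: "unitary_mat n U" and d: "\<And>i. i < n \<Longrightarrow> 0 < d i"
    and \<rho>: "\<rho> = U * mat_diag n (\<lambda>i. complex_of_real (d i)) * cadj U"
    and h\<rho>: "hermitian_mat n \<rho>" and H: "hermitian_mat n H"
  defines "K \<equiv> cadj U * centered n \<rho> H * U"
  shows "Ifun n \<rho> a b H = (\<Sum>i<n. \<Sum>j<n. (cmod (K $$ (i, j)))\<^sup>2 * Iweight a b (d i) (d j)) / 2"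
    and "Jfun n \<rho> a b H = (\<Sum>i<n. \<Sum>j<n. (cmod (K $$ (i, j)))\<^sup>2 * Jweight a b (d i) (d j)) / 2"
proof -
  define H0 where "H0 = centered n \<rho> H"
  have H0: "hermitian_mat n H0" unfolding H0_def by (rule hermitian_centered[OF h\<rho> H])
  define S where "S t = (\<Sum>i<n. \<Sum>j<n. d i powr t * d j powr (1 - t) * (cmod (K $$ (i, j)))\<^sup>2)" for t
  have skew: "skewterm n \<rho> t H0 = of_real (S t)" for t
    unfolding S_def K_def H0_def[symmetric] by (rule skewterm_eigenbasis[OF U d \<rho> H0])
  have square: "mtrace (\<rho> * (H0 * H0)) = of_real (\<Sum>i<n. \<Sum>j<n. d i * (cmod (K $$ (i, j)))\<^sup>2)"
    unfolding K_def H0_def[symmetric] by (rule mtrace_square_eigenbasis[OF U \<rho> H0])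
  show "Ifun n \<rho> a b H = (\<Sum>i<n. \<Sum>j<n. (cmod (K $$ (i, j)))\<^sup>2 * Iweight a b (d i) (d j)) / 2"
    unfolding Ifun_def Let_def H0_def[symmetric] skew square
    by (simp add: S_def Iweight_def sum.distrib sum_subtractf algebra_simps)
  show "Jfun n \<rho> a b H = (\<Sum>i<n. \<Sum>j<n. (cmod (K $$ (i, j)))\<^sup>2 * Jweight a b (d i) (d j)) / 2"
    unfolding Jfun_def Let_def H0_def[symmetric] skew square
    by (simp add: S_def Jweight_def sum.distrib algebra_simps)
qed

text \<open>Centring does not change the commutator; in the eigenbasis this shows up as the
  vanishing of the diagonal terms, which carry the factor \<open>d i - d i = 0\<close>.\<close>
lemma mtrace_commutator_eigenbasis:
  assumes U: "unitary_mat n U"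
    and \<rho>: "\<rho> = U * mat_diag n (\<lambda>i. complex_of_real (d i)) * cadj U"
    and A: "A \<in> carrier_mat n n" and B: "B \<in> carrier_mat n n"
  defines "KA \<equiv> cadj U * centered n \<rho> A * U" and "KB \<equiv> cadj U * centered n \<rho> B * U"
  shows "mtrace (\<rho> * (A * B - B * A))
    = (\<Sum>i<n. \<Sum>j<n. of_real (d i - d j) * KA $$ (i, j) * KB $$ (j, i))"
proof -
  note Uc = unitary_matD[OF U] and sq = assoc_mult_mat[of _ n n _ n _ n] mult_carrier_mat[of _ n n _ n]
  have \<rho>c: "\<rho> \<in> carrier_mat n n" using Uc unfolding \<rho> by (simp add: sq)
  define A' B' where "A' = cadj U * A * U" and "B' = cadj U * B * U"
  have trace: "mtrace (\<rho> * (X * Y))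
      = (\<Sum>i<n. \<Sum>j<n. of_real (d i) * (cadj U * X * U) $$ (i, j) * (cadj U * Y * U) $$ (j, i))"
    if "X \<in> carrier_mat n n" "Y \<in> carrier_mat n n" for X Y
  proof -
    have "\<rho> * (X * Y) = (U * mat_diag n (\<lambda>i. complex_of_real (d i)) * cadj U) * X
        * (U * mat_diag n (\<lambda>_. 1) * cadj U) * Y"
      using that \<rho>c unfolding unitary_conj_one[OF U] \<rho>[symmetric]
      by (simp add: sq right_mult_one_mat[of _ n n])
    then show ?thesis
      using mtrace_unitary_diag_product[OF U that, of "\<lambda>i. complex_of_real (d i)" "\<lambda>_. 1"] by simp
  qed
  have "mtrace (\<rho> * (B * A)) = (\<Sum>i<n. \<Sum>j<n. of_real (d i) * B' $$ (i, j) * A' $$ (j, i))"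
    unfolding trace[OF B A] A'_def B'_def ..
  also have "\<dots> = (\<Sum>i<n. \<Sum>j<n. of_real (d j) * A' $$ (i, j) * B' $$ (j, i))"
    by (subst sum.swap) (simp add: mult_ac)
  finally have BA: "mtrace (\<rho> * (B * A)) = \<dots>" .
  have "\<rho> * (A * B - B * A) = \<rho> * (A * B) - \<rho> * (B * A)"
    using \<rho>c A B by (intro mult_minus_distrib_mat[of _ n n]) auto
  then have "mtrace (\<rho> * (A * B - B * A)) = mtrace (\<rho> * (A * B)) - mtrace (\<rho> * (B * A))"
    using \<rho>c A B by (simp add: mtrace_minus[of _ n])
  also have "\<dots> = (\<Sum>i<n. \<Sum>j<n. of_real (d i - d j) * A' $$ (i, j) * B' $$ (j, i))"
    unfolding BA trace[OF A B] A'_def[symmetric] B'_def[symmetric]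
    by (simp add: sum_subtractf left_diff_distrib)
  also have "\<dots> = (\<Sum>i<n. \<Sum>j<n. of_real (d i - d j) * KA $$ (i, j) * KB $$ (j, i))"
  proof (intro sum.cong refl)
    fix i j assume ij: "i \<in> {..<n}" "j \<in> {..<n}"
    show "of_real (d i - d j) * A' $$ (i, j) * B' $$ (j, i) = of_real (d i - d j) * KA $$ (i, j) * KB $$ (j, i)"
    proof (cases "i = j")
      case False
      with ij have "KA $$ (i, j) = A' $$ (i, j)" "KB $$ (j, i) = B' $$ (j, i)"
        unfolding KA_def KB_def A'_def B'_def
        by (auto intro!: unitary_conj_centered_offdiag[OF U A] unitary_conj_centered_offdiag[OF U B])
      then show ?thesis by simp
    qed simp
  qed
  finally show ?thesis .
qed

lemma le_sqrt_mult_sqrt: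
  fixes c p q r s :: real
  assumes "0 \<le> c" "c \<le> p * q" "c \<le> r * s"
  shows "c \<le> sqrt (p * s) * sqrt (r * q)"
proof -
  have "c * c \<le> (p * q) * (r * s)"
    using assms by (intro mult_mono) auto
  then have "sqrt (c\<^sup>2) \<le> sqrt ((p * s) * (r * q))"
    by (intro real_sqrt_le_mono) (simp add: power2_eq_square algebra_simps)
  then show ?thesis
    using assms(1) by (simp add: real_sqrt_mult)
qed

lemma commutator_le_Ifun_mult_Jfun:
  assumes \<rho>: "posdef_mat n \<rho>" and A: "hermitian_mat n A" and B: "hermitian_mat n B"
    and ab: "0 \<le> \<alpha>" "0 \<le> \<beta>" "1 \<le> \<alpha> + \<beta> \<or> \<alpha> + \<beta> \<le> 1/2"
  shows "\<alpha> * \<beta> * (cmod (mtrace (\<rho> * (A * B - B * A))))\<^sup>2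
    \<le> Ifun n \<rho> \<alpha> \<beta> A * Jfun n \<rho> \<alpha> \<beta> B"
proof -
  have h\<rho>: "hermitian_mat n \<rho>" using \<rho> by (simp add: posdef_mat_def)
  obtain U d where U: "unitary_mat n U" and \<rho>_eq: "\<rho> = U * mat_diag n (\<lambda>i. complex_of_real (d i)) * cadj U"
    using hermitian_mat_spectral[OF h\<rho>] .
  have d: "\<And>i. i < n \<Longrightarrow> 0 < d i" by (rule posdef_unitary_diag_pos[OF \<rho> U \<rho>_eq])
  define KA KB where "KA = cadj U * centered n \<rho> A * U" and "KB = cadj U * centered n \<rho> B * U"
  have KA: "hermitian_mat n KA" and KB: "hermitian_mat n KB"
    unfolding KA_def KB_def using A B h\<rho> U by (simp_all add: hermitian_unitary_conj hermitian_centered)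
  have "\<alpha> * \<beta> * (cmod (\<Sum>i<n. \<Sum>j<n. of_real (d i - d j) * KA $$ (i, j) * KB $$ (j, i)))\<^sup>2
    \<le> Ifun n \<rho> \<alpha> \<beta> A * Jfun n \<rho> \<alpha> \<beta> B"
    using commutator_sum_le[of n d "\<lambda>i j. KA $$ (i, j)" "\<lambda>i j. KB $$ (i, j)",
        OF d hermitian_matD[OF KA] hermitian_matD[OF KB] ab]
    by (simp add: Ifun_Jfun_eigenbasis[OF U d \<rho>_eq h\<rho> A, folded KA_def]
        Ifun_Jfun_eigenbasis[OF U d \<rho>_eq h\<rho> B, folded KB_def])
  moreover have "mtrace (\<rho> * (A * B - B * A))
      = (\<Sum>i<n. \<Sum>j<n. of_real (d i - d j) * KA $$ (i, j) * KB $$ (j, i))"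
    using A B unfolding KA_def KB_def
    by (intro mtrace_commutator_eigenbasis[OF U \<rho>_eq]) (simp_all add: hermitian_mat_def)
  ultimately show ?thesis by simp
qed

lemma cmod_mtrace_commutator_swap:
  assumes "\<rho> \<in> carrier_mat n n" "A \<in> carrier_mat n n" "B \<in> carrier_mat n n"
  shows "cmod (mtrace (\<rho> * (B * A - A * B))) = cmod (mtrace (\<rho> * (A * B - B * A)))"
proof -
  have "\<rho> * (X * Y - Y * X) = \<rho> * (X * Y) - \<rho> * (Y * X)"
    if "X \<in> carrier_mat n n" "Y \<in> carrier_mat n n" for X Y
    using assms(1) that by (intro mult_minus_distrib_mat[of _ n n]) auto
  then show ?thesis
    using assms by (simp add: mtrace_minus[of _ n] norm_minus_commute)
qed

theorem theorem3p1:
  fixes n :: nat and \<rho> A B :: "complex mat" and \<alpha> \<beta> :: real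
  assumes "density_mat n \<rho>"
    and "hermitian_mat n A" and "hermitian_mat n B"
    and "\<alpha> \<ge> 0" and "\<beta> \<ge> 0"
    and "\<alpha> + \<beta> \<ge> 1 \<or> \<alpha> + \<beta> \<le> 1/2"
  shows "Ufun n \<rho> \<alpha> \<beta> A * Ufun n \<rho> \<alpha> \<beta> B
           \<ge> \<alpha> * \<beta> * (cmod (mtrace (\<rho> * (A * B - B * A))))\<^sup>2"
proof -
  have \<rho>: "posdef_mat n \<rho>" using assms(1) by (simp add: density_mat_def)
  have "cmod (mtrace (\<rho> * (B * A - A * B))) = cmod (mtrace (\<rho> * (A * B - B * A)))"
    using \<rho> assms(2,3) by (intro cmod_mtrace_commutator_swap) (auto simp: posdef_mat_def hermitian_mat_def)
  then have "\<alpha> * \<beta> * (cmod (mtrace (\<rho> * (A * B - B * A))))\<^sup>2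
      \<le> Ifun n \<rho> \<alpha> \<beta> B * Jfun n \<rho> \<alpha> \<beta> A"
    using commutator_le_Ifun_mult_Jfun[OF \<rho> assms(3,2,4-6)] by simp
  moreover have "\<alpha> * \<beta> * (cmod (mtrace (\<rho> * (A * B - B * A))))\<^sup>2
      \<le> Ifun n \<rho> \<alpha> \<beta> A * Jfun n \<rho> \<alpha> \<beta> B"
    by (rule commutator_le_Ifun_mult_Jfun[OF \<rho> assms(2-6)])
  ultimately show ?thesis
    unfolding Ufun_def using assms(4,5) by (intro le_sqrt_mult_sqrt) auto
qed

end
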